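(* Fix $a>0$ and $\delta\in(0,1)$. For $T\ge1$ define the random set $$C_T=\{\beta\in\mathbb R : S_T^\beta \le 1/\delta\},$$ where $$S_T^\beta = \frac{1}{\sqrt{a^2\Gamma_0(T)+1}}\exp\!\left(\frac{a^2(\Gamma_1(T)-\beta\Gamma_0(T))^2}{2(a^2\Gamma_0(T)+1)}\right).$$ Then: (i) whenever $\Gamma_0(T)>0$, $$C_T=\left\{\beta : \left|\beta-\frac{\Gamma_1(T)}{\Gamma_0(T)}\right| \le \sqrt{\frac{a^2\Gamma_0(T)+1}{a^2\Gamma_0(T)^2}\ln\frac{a^2\Gamma_0(T)+1}{\delta^2}}\right\};$$ (ii) for every $\alpha\in\mathbb R$, $$\mathbb P_\alpha\Big(\alpha\in\bigcap_{T=1}^\infty C_T\Big)\ge 1-\delta.$$ That is, the sets $C_T$ form strong $(1-\delta)$-confidence intervals for $\alpha$.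
   Context: Autoregressive model: $y_0$ is a fixed real constant, and $y_t = \alpha y_{t-1} + \epsilon_t$ for $t=1,2,\dots$, where the innovations $\epsilon_1,\epsilon_2,\dots$ are independent $N(0,1)$ random variables. $\mathbb{P}_\alpha$ denotes the probability measure of this model with coefficient $\alpha\in\mathbb R$. For $T\ge1$ set $\Gamma_0(T)=\sum_{t=1}^T y_{t-1}^2$ and $\Gamma_1(T)=\sum_{t=1}^T y_{t-1}y_t$. *)

theory Defs
  imports "HOL-Probability.Probability"
begin

text \<open>AR(1) path: y_0 = y0, y_t = alpha * y_(t-1) + e t for t >= 1
  (the value e 0 is never used; innovations are e 1, e 2, ...).\<close>
fun ar_path :: "real \<Rightarrow> real \<Rightarrow> (nat \<Rightarrow> real) \<Rightarrow> nat \<Rightarrow> real" where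
  "ar_path \<alpha> y0 e 0 = y0"
| "ar_path \<alpha> y0 e (Suc t) = \<alpha> * ar_path \<alpha> y0 e t + e (Suc t)"

definition Gamma0 :: "real \<Rightarrow> real \<Rightarrow> (nat \<Rightarrow> real) \<Rightarrow> nat \<Rightarrow> real" where
  "Gamma0 \<alpha> y0 e T = (\<Sum>t=1..T. (ar_path \<alpha> y0 e (t - 1))\<^sup>2)"

definition Gamma1 :: "real \<Rightarrow> real \<Rightarrow> (nat \<Rightarrow> real) \<Rightarrow> nat \<Rightarrow> real" where
  "Gamma1 \<alpha> y0 e T = (\<Sum>t=1..T. ar_path \<alpha> y0 e (t - 1) * ar_path \<alpha> y0 e t)"

definition S_stat :: "real \<Rightarrow> real \<Rightarrow> real \<Rightarrow> real \<Rightarrow> real" where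
  "S_stat a \<beta> G0 G1 =
     1 / sqrt (a\<^sup>2 * G0 + 1) * exp (a\<^sup>2 * (G1 - \<beta> * G0)\<^sup>2 / (2 * (a\<^sup>2 * G0 + 1)))"

definition conf_set :: "real \<Rightarrow> real \<Rightarrow> real \<Rightarrow> real \<Rightarrow> real set" where
  "conf_set a \<delta> G0 G1 = {\<beta>. S_stat a \<beta> G0 G1 \<le> 1 / \<delta>}"

end

theory Submission
  imports Defs
begin

(* Part (i) is pure algebra: S_T^beta <= 1/delta is a quadratic inequality in beta,
   solved by taking logarithms.

   Part (ii) is Ville's inequality for a test martingale.  Writing
   S_T^beta = mix_stat a Gamma_0(T) (Gamma_1(T) - beta Gamma_0(T)), the key identity
   (mix_stat_gauss_average) says that averaging the next value of mix_stat over one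
   standard Gaussian innovation returns its current value; under P_alpha and at
   beta = alpha this makes S_T^alpha a nonnegative martingale with S_0 = 1. *)


section \<open>The test statistic and part (i)\<close>

text \<open>The statistic as a function of G = \<Gamma>_0 and of the martingale part
  m = \<Gamma>_1 - \<beta> \<Gamma>_0.\<close>
definition mix_stat :: "real \<Rightarrow> real \<Rightarrow> real \<Rightarrow> real" where
  "mix_stat a G m = 1 / sqrt (a\<^sup>2 * G + 1) * exp (a\<^sup>2 * m\<^sup>2 / (2 * (a\<^sup>2 * G + 1)))"

lemma S_stat_eq_mix_stat: "S_stat a \<beta> G0 G1 = mix_stat a G0 (G1 - \<beta> * G0)"
  by (simp add: S_stat_def mix_stat_def)

lemma mix_stat_nonneg: "G \<ge> 0 \<Longrightarrow> mix_stat a G m \<ge> 0"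
  by (simp add: mix_stat_def add_nonneg_pos)

lemma conf_set_interval:
  fixes a \<delta> G0 G1 :: real
  assumes a: "a > 0" and \<delta>: "0 < \<delta>" "\<delta> < 1" and G0: "G0 > 0"
  shows "conf_set a \<delta> G0 G1 = {\<beta>. \<bar>\<beta> - G1 / G0\<bar> \<le>
              sqrt ((a\<^sup>2 * G0 + 1) / (a\<^sup>2 * G0\<^sup>2) * ln ((a\<^sup>2 * G0 + 1) / \<delta>\<^sup>2))}"
proof -
  define v where "v = a\<^sup>2 * G0 + 1"
  have v: "v > 1" using a G0 by (simp add: v_def)
  have ln_v: "ln (v / \<delta>\<^sup>2) = 2 * ln (sqrt v / \<delta>)"
  proof -
    have "v / \<delta>\<^sup>2 = (sqrt v / \<delta>)\<^sup>2" using v by (simp add: power_divide)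
    then show ?thesis using v \<delta> by (simp add: ln_realpow)
  qed
  have radius_nonneg: "0 \<le> v / (a\<^sup>2 * G0\<^sup>2) * ln (v / \<delta>\<^sup>2)"
  proof -
    have "\<delta>\<^sup>2 < 1" using \<delta> by (simp add: power_less_one_iff)
    then have "1 < v / \<delta>\<^sup>2" using v \<delta> by simp
    then show ?thesis using v by simp
  qed
  have "\<beta> \<in> conf_set a \<delta> G0 G1 \<longleftrightarrow> \<bar>\<beta> - G1 / G0\<bar> \<le> sqrt (v / (a\<^sup>2 * G0\<^sup>2) * ln (v / \<delta>\<^sup>2))"
    for \<beta>
  proof -
    have sq: "(G1 - \<beta> * G0)\<^sup>2 = G0\<^sup>2 * (\<beta> - G1 / G0)\<^sup>2"
      using G0 by (simp add: field_simps power2_eq_square)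
    have "\<beta> \<in> conf_set a \<delta> G0 G1 \<longleftrightarrow> exp (a\<^sup>2 * (G1 - \<beta> * G0)\<^sup>2 / (2 * v)) \<le> sqrt v / \<delta>"
      using v \<delta> by (simp add: conf_set_def S_stat_def v_def field_simps)
    also have "\<dots> \<longleftrightarrow> a\<^sup>2 * (G1 - \<beta> * G0)\<^sup>2 / (2 * v) \<le> ln (sqrt v / \<delta>)"
      using v \<delta> by (subst ln_ge_iff[symmetric]) auto
    also have "\<dots> \<longleftrightarrow> (\<beta> - G1 / G0)\<^sup>2 \<le> v / (a\<^sup>2 * G0\<^sup>2) * ln (v / \<delta>\<^sup>2)"
      unfolding ln_v sq using v a G0 by (simp add: field_simps)
    also have "\<dots> \<longleftrightarrow> \<bar>\<beta> - G1 / G0\<bar> \<le> sqrt (v / (a\<^sup>2 * G0\<^sup>2) * ln (v / \<delta>\<^sup>2))"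
      using radius_nonneg by (metis abs_ge_zero power2_abs real_le_rsqrt real_sqrt_le_iff
          real_sqrt_pow2 real_sqrt_abs)
    finally show ?thesis .
  qed
  then show ?thesis by (auto simp: v_def)
qed


section \<open>One Gaussian step of the statistic\<close>

abbreviation N01 :: "real measure" where
  "N01 \<equiv> density lborel (\<lambda>z. ennreal (std_normal_density z))"

text \<open>Completing the square: the Gaussian density times the updated statistic is the
  current statistic times a (non-standard) normal density in the innovation.\<close>
lemma mix_stat_gauss_factor:
  fixes a G m y z :: real
  assumes G: "G \<ge> 0"
  defines "v \<equiv> a\<^sup>2 * G + 1"
  defines "w \<equiv> v + a\<^sup>2 * y\<^sup>2"
  shows "std_normal_density z * mix_stat a (G + y\<^sup>2) (m + y * z) =
     mix_stat a G m * normal_density (a\<^sup>2 * m * y / v) (sqrt (w / v)) z"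
proof -
  have v: "v > 0" using G unfolding v_def by (simp add: add_nonneg_pos)
  have w: "w > 0" using v unfolding w_def by (simp add: add_pos_nonneg)
  have w_eq: "a\<^sup>2 * (G + y\<^sup>2) + 1 = w" by (simp add: w_def v_def algebra_simps)
  have exponent: "- z\<^sup>2 / 2 + a\<^sup>2 * (m + y * z)\<^sup>2 / (2 * w) =
       a\<^sup>2 * m\<^sup>2 / (2 * v) + - (z - a\<^sup>2 * m * y / v)\<^sup>2 / (2 * (sqrt (w / v))\<^sup>2)"
  proof -
    have numerators: "- z\<^sup>2 * v * w + a\<^sup>2 * v * (m + y * z)\<^sup>2
        = a\<^sup>2 * m\<^sup>2 * w - (v * z - a\<^sup>2 * m * y)\<^sup>2"
      unfolding w_def by (simp add: power2_eq_square algebra_simps)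
    have "- z\<^sup>2 / 2 + a\<^sup>2 * (m + y * z)\<^sup>2 / (2 * w)
        = (- z\<^sup>2 * v * w + a\<^sup>2 * v * (m + y * z)\<^sup>2) / (2 * v * w)"
      using v w by (simp add: field_simps)
    also have "\<dots> = (a\<^sup>2 * m\<^sup>2 * w - (v * z - a\<^sup>2 * m * y)\<^sup>2) / (2 * v * w)"
      unfolding numerators ..
    also have "\<dots> = a\<^sup>2 * m\<^sup>2 / (2 * v) + - ((z - a\<^sup>2 * m * y / v)\<^sup>2 / (2 * (w / v)))"
      using v w by (simp add: field_simps power2_eq_square)
    finally show ?thesis using v w by simp
  qed
  have constants: "1 / sqrt (2 * pi) * (1 / sqrt w)
      = 1 / sqrt v * (1 / sqrt (2 * pi * (sqrt (w / v))\<^sup>2))"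
    using v w by (simp add: real_sqrt_mult real_sqrt_divide field_simps)
  have "std_normal_density z * mix_stat a (G + y\<^sup>2) (m + y * z) =
     (1 / sqrt (2 * pi) * (1 / sqrt w)) * exp (- z\<^sup>2 / 2 + a\<^sup>2 * (m + y * z)\<^sup>2 / (2 * w))"
    unfolding std_normal_density_def mix_stat_def w_eq exp_add by simp
  also have "\<dots> = mix_stat a G m * normal_density (a\<^sup>2 * m * y / v) (sqrt (w / v)) z"
    unfolding exponent constants mix_stat_def normal_density_def exp_add v_def by simp
  finally show ?thesis .
qed

lemma nn_integral_normal_density:
  assumes "\<sigma> > 0"
  shows "(\<integral>\<^sup>+ z. ennreal (normal_density \<mu> \<sigma> z) \<partial>lborel) = 1"
proof -
  interpret prob_space "density lborel (normal_density \<mu> \<sigma>)"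
    using assms by (rule prob_space_normal_density)
  show ?thesis using emeasure_space_1 by (simp add: emeasure_density)
qed

lemma mix_stat_measurable: "(\<lambda>z. ennreal (mix_stat a G (m + y * z))) \<in> borel_measurable borel"
  unfolding mix_stat_def by measurable

lemma mix_stat_gauss_average:
  assumes G: "G \<ge> 0"
  shows "(\<integral>\<^sup>+ z. ennreal (mix_stat a (G + y\<^sup>2) (m + y * z)) \<partial>N01) = ennreal (mix_stat a G m)"
proof -
  define \<sigma> where "\<sigma> = sqrt ((a\<^sup>2 * G + 1 + a\<^sup>2 * y\<^sup>2) / (a\<^sup>2 * G + 1))"
  define \<mu> where "\<mu> = a\<^sup>2 * m * y / (a\<^sup>2 * G + 1)"
  have "a\<^sup>2 * G + 1 > 0" using G by (simp add: add_nonneg_pos)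
  then have \<sigma>: "\<sigma> > 0" by (simp add: \<sigma>_def add_pos_nonneg)
  have "(\<integral>\<^sup>+ z. ennreal (mix_stat a (G + y\<^sup>2) (m + y * z)) \<partial>N01)
      = (\<integral>\<^sup>+ z. ennreal (std_normal_density z) * ennreal (mix_stat a (G + y\<^sup>2) (m + y * z)) \<partial>lborel)"
    by (rule nn_integral_density) (auto simp: mix_stat_measurable)
  also have "\<dots> = (\<integral>\<^sup>+ z. ennreal (mix_stat a G m) * ennreal (normal_density \<mu> \<sigma> z) \<partial>lborel)"
    using mix_stat_gauss_factor[OF G, where a=a and m=m and y=y] mix_stat_nonneg[OF G]
    by (intro nn_integral_cong) (simp add: \<mu>_def \<sigma>_def ennreal_mult'[symmetric])
  also have "\<dots> = ennreal (mix_stat a G m)"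
    by (subst nn_integral_cmult) (auto simp: nn_integral_normal_density[OF \<sigma>])
  finally show ?thesis .
qed


lemma Gamma0_Suc: "Gamma0 \<alpha> y0 x (Suc n) = Gamma0 \<alpha> y0 x n + (ar_path \<alpha> y0 x n)\<^sup>2"
  by (simp add: Gamma0_def)

lemma Gamma1_Suc:
  "Gamma1 \<alpha> y0 x (Suc n) = Gamma1 \<alpha> y0 x n + ar_path \<alpha> y0 x n * ar_path \<alpha> y0 x (Suc n)"
  by (simp add: Gamma1_def)

lemma Gamma0_nonneg: "Gamma0 \<alpha> y0 x n \<ge> 0"
  by (simp add: Gamma0_def sum_nonneg)

definition S_path :: "real \<Rightarrow> real \<Rightarrow> real \<Rightarrow> (nat \<Rightarrow> real) \<Rightarrow> nat \<Rightarrow> real" where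
  "S_path a \<alpha> y0 x T = S_stat a \<alpha> (Gamma0 \<alpha> y0 x T) (Gamma1 \<alpha> y0 x T)"

lemma S_path_0: "S_path a \<alpha> y0 x 0 = 1"
  by (simp add: S_path_def S_stat_def Gamma0_def Gamma1_def)

lemma S_path_nonneg: "S_path a \<alpha> y0 x T \<ge> 0"
  by (simp add: S_path_def S_stat_eq_mix_stat mix_stat_nonneg Gamma0_nonneg)

text \<open>At \<beta> = \<alpha> the martingale part \<Gamma>_1 - \<alpha>\<Gamma>_0 grows by
  y_n \<epsilon>_(n+1), so one step of the statistic is a Gaussian step as above.\<close>
lemma S_path_Suc:
  "S_path a \<alpha> y0 x (Suc n) = mix_stat a (Gamma0 \<alpha> y0 x n + (ar_path \<alpha> y0 x n)\<^sup>2)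
     ((Gamma1 \<alpha> y0 x n - \<alpha> * Gamma0 \<alpha> y0 x n) + ar_path \<alpha> y0 x n * x (Suc n))"
  by (simp add: S_path_def S_stat_eq_mix_stat Gamma0_Suc Gamma1_Suc algebra_simps power2_eq_square)


section \<open>Adapted functionals of the innovation sequence\<close>

definition adapted :: "nat \<Rightarrow> ((nat \<Rightarrow> real) \<Rightarrow> real) \<Rightarrow> bool" where
  "adapted n f \<longleftrightarrow> f \<in> borel_measurable (PiM {1..n} (\<lambda>_. N01)) \<and>
     (\<forall>x x'. (\<forall>s\<in>{1..n}. x s = x' s) \<longrightarrow> f x = f x')"

lemma adapted_prefix:
  "adapted n f \<Longrightarrow> (\<And>s. 1 \<le> s \<Longrightarrow> s \<le> n \<Longrightarrow> x s = x' s) \<Longrightarrow> f x = f x'"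
  by (simp add: adapted_def)

lemma adapted_restrict: "adapted n f \<Longrightarrow> f (restrict x {1..n}) = f x"
  by (rule adapted_prefix) auto

lemma adapted_measurable:
  assumes f: "adapted n f" and I: "{1..n} \<subseteq> I"
  shows "f \<in> borel_measurable (PiM I (\<lambda>_. N01))"
proof -
  have "(\<lambda>x. f (restrict x {1..n})) \<in> borel_measurable (PiM I (\<lambda>_. N01))"
    using measurable_comp[OF measurable_restrict_subset[OF I] conjunct1[OF f[unfolded adapted_def]]]
    by (simp add: comp_def)
  moreover have "(\<lambda>x. f (restrict x {1..n})) = f"
    by (rule ext) (rule adapted_restrict[OF f])
  ultimately show ?thesis by simp
qed

lemma adapted_mono: "adapted n f \<Longrightarrow> n \<le> m \<Longrightarrow> adapted m f"
  unfolding adapted_def by (auto intro: adapted_measurable[unfolded adapted_def])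

lemma adapted_const: "adapted n (\<lambda>_. c)"
  by (simp add: adapted_def)

lemma adapted_coord: "1 \<le> n \<Longrightarrow> adapted n (\<lambda>x. x n)"
proof -
  assume n: "1 \<le> n"
  have "(\<lambda>x. x n) \<in> measurable (PiM {1..n} (\<lambda>_. N01)) N01"
    using n by (intro measurable_component_singleton) auto
  then show ?thesis
    using n by (simp add: adapted_def measurable_cong_sets[OF refl sets_density])
qed

lemma adapted_compose2:
  assumes f: "adapted n f" and g: "adapted n g"
    and h: "(\<lambda>p. h (fst p) (snd p)) \<in> borel_measurable (borel \<Otimes>\<^sub>M borel)"
  shows "adapted n (\<lambda>x. h (f x) (g x))"
proof -
  have "f \<in> borel_measurable (PiM {1..n} (\<lambda>_. N01))" "g \<in> borel_measurable (PiM {1..n} (\<lambda>_. N01))"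
    using f g by (simp_all add: adapted_def)
  moreover have "h (f x) (g x) = h (f x') (g x')" if "\<forall>s\<in>{1..n}. x s = x' s" for x x'
    using adapted_prefix[OF f, of x x'] adapted_prefix[OF g, of x x'] that by simp
  ultimately show ?thesis
    using measurable_compose[OF measurable_Pair h] by (simp add: adapted_def)
qed

lemma adapted_sum:
  "finite A \<Longrightarrow> (\<And>i. i \<in> A \<Longrightarrow> adapted n (f i)) \<Longrightarrow> adapted n (\<lambda>x. \<Sum>i\<in>A. f i x)"
  unfolding adapted_def by (auto intro!: sum.cong borel_measurable_sum)

lemma adapted_mult: "adapted n f \<Longrightarrow> adapted n g \<Longrightarrow> adapted n (\<lambda>x. f x * g x)"
  by (rule adapted_compose2[where h="(*)"]) measurable

lemma adapted_ar_path: "adapted t (\<lambda>x. ar_path \<alpha> y0 x t)"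
proof (induction t)
  case 0
  then show ?case by (simp add: adapted_const)
next
  case (Suc t)
  have "adapted (Suc t) (\<lambda>x. ar_path \<alpha> y0 x t)" using Suc adapted_mono by auto
  then have "adapted (Suc t) (\<lambda>x. \<alpha> * ar_path \<alpha> y0 x t + x (Suc t))"
    by (rule adapted_compose2[where h="\<lambda>u v. \<alpha> * u + v", OF _ adapted_coord]) (auto, measurable)
  then show ?case by simp
qed

lemma adapted_Gamma0: "adapted T (\<lambda>x. Gamma0 \<alpha> y0 x T)"
  unfolding Gamma0_def power2_eq_square
  by (intro adapted_sum adapted_mult adapted_mono[OF adapted_ar_path]) auto

lemma adapted_Gamma1: "adapted T (\<lambda>x. Gamma1 \<alpha> y0 x T)"
  unfolding Gamma1_def
  by (intro adapted_sum adapted_mult adapted_mono[OF adapted_ar_path]) auto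

lemma adapted_S_path: "adapted T (\<lambda>x. S_path a \<alpha> y0 x T)"
  unfolding S_path_def S_stat_def
  by (rule adapted_compose2[OF adapted_Gamma0 adapted_Gamma1]) measurable


lemma S_path_step_average:
  assumes c: "c \<ge> 0"
  shows "(\<integral>\<^sup>+z. ennreal (c * S_path a \<alpha> y0 (x(Suc n := z)) (Suc n)) \<partial>N01)
       = ennreal (c * S_path a \<alpha> y0 x n)"
proof -
  define G where "G = Gamma0 \<alpha> y0 x n"
  define m where "m = Gamma1 \<alpha> y0 x n - \<alpha> * Gamma0 \<alpha> y0 x n"
  define y where "y = ar_path \<alpha> y0 x n"
  have past: "f (x(Suc n := z)) = f x" if "adapted n f" for f :: "(nat \<Rightarrow> real) \<Rightarrow> real" and z
    using that by (rule adapted_prefix) auto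
  have "S_path a \<alpha> y0 (x(Suc n := z)) (Suc n) = mix_stat a (G + y\<^sup>2) (m + y * z)" for z
    unfolding S_path_Suc G_def m_def y_def
    using past[OF adapted_Gamma0] past[OF adapted_Gamma1] past[OF adapted_ar_path] by simp
  then have "(\<integral>\<^sup>+z. ennreal (c * S_path a \<alpha> y0 (x(Suc n := z)) (Suc n)) \<partial>N01)
      = (\<integral>\<^sup>+z. ennreal c * ennreal (mix_stat a (G + y\<^sup>2) (m + y * z)) \<partial>N01)"
    using c by (simp add: ennreal_mult mix_stat_nonneg G_def Gamma0_nonneg)
  also have "\<dots> = ennreal c * ennreal (mix_stat a G m)"
    using mix_stat_measurable by (simp add: nn_integral_cmult mix_stat_gauss_average G_def Gamma0_nonneg)
  also have "\<dots> = ennreal (c * S_path a \<alpha> y0 x n)"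
    using c by (simp add: S_path_def S_stat_eq_mix_stat G_def m_def ennreal_mult mix_stat_nonneg
        Gamma0_nonneg)
  finally show ?thesis .
qed


locale gaussian_noise = prob_space M for M :: "'w measure" +
  fixes \<epsilon> :: "nat \<Rightarrow> 'w \<Rightarrow> real"
  assumes indep: "indep_vars (\<lambda>_. borel) \<epsilon> {1..}"
    and normal: "\<And>t. t \<ge> 1 \<Longrightarrow> distributed M lborel (\<epsilon> t) std_normal_density"
begin

abbreviation noise :: "'w \<Rightarrow> nat \<Rightarrow> real" where
  "noise \<omega> \<equiv> \<lambda>t. \<epsilon> t \<omega>"

lemma noise_restrict_measurable:
  "(\<lambda>\<omega>. restrict (noise \<omega>) {1..n}) \<in> measurable M (PiM {1..n} (\<lambda>_. N01))"
proof (intro measurable_restrict)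
  fix i :: nat assume "i \<in> {1..n}"
  then have "\<epsilon> i \<in> measurable M lborel" using distributed_measurable[OF normal] by auto
  then show "\<epsilon> i \<in> measurable M N01" by (simp add: measurable_cong_sets[OF refl sets_density])
qed

lemma measurable_adapted:
  assumes F: "adapted n F"
  shows "(\<lambda>\<omega>. F (noise \<omega>)) \<in> borel_measurable M"
  using measurable_comp[OF noise_restrict_measurable[of n] conjunct1[OF F[unfolded adapted_def]]]
  by (simp only: comp_def adapted_restrict[OF F])

lemma distr_noise: "distr M (PiM {1..n} (\<lambda>_. N01)) (\<lambda>\<omega>. restrict (noise \<omega>) {1..n}) = PiM {1..n} (\<lambda>_. N01)"
proof (cases "n = 0")
  case True
  then have "(\<lambda>\<omega>. restrict (noise \<omega>) {1..n}) = (\<lambda>_ _. undefined)"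
    by (simp add: restrict_def)
  then show ?thesis
    using True by (intro measure_eqI) (auto simp: PiM_empty emeasure_distr emeasure_space_1 subset_singleton_iff)
next
  case False
  then have ne: "{1..n} \<noteq> {}" by simp
  have rv: "random_variable borel (\<epsilon> i)" if "i \<in> {1..n}" for i
    using distributed_measurable[OF normal, of i] that by auto
  have indep_n: "indep_vars (\<lambda>_. borel) \<epsilon> {1..n}"
    by (rule indep_vars_subset[OF indep]) auto
  have "distr M (PiM {1..n} (\<lambda>_. N01)) (\<lambda>\<omega>. restrict (noise \<omega>) {1..n})
      = distr M (PiM {1..n} (\<lambda>_. borel)) (\<lambda>\<omega>. restrict (noise \<omega>) {1..n})"
    by (rule distr_cong[OF refl sets_PiM_cong refl]) auto
  also have "\<dots> = PiM {1..n} (\<lambda>i. distr M borel (\<epsilon> i))"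
    using indep_vars_iff_distr_eq_PiM'[OF ne rv] indep_n by simp
  also have "\<dots> = PiM {1..n} (\<lambda>_. N01)"
  proof (rule PiM_cong[OF refl])
    fix i assume "i \<in> {1..n}"
    then have "distr M lborel (\<epsilon> i) = N01"
      using distributed_distr_eq_density[OF normal] by auto
    then show "distr M borel (\<epsilon> i) = N01"
      by (metis distr_cong sets_lborel)
  qed
  finally show ?thesis .
qed

lemma nn_integral_adapted:
  assumes F: "adapted n F"
  shows "(\<integral>\<^sup>+\<omega>. ennreal (F (noise \<omega>)) \<partial>M) = (\<integral>\<^sup>+x. ennreal (F x) \<partial>PiM {1..n} (\<lambda>_. N01))"
proof -
  have "(\<integral>\<^sup>+\<omega>. ennreal (F (noise \<omega>)) \<partial>M) = (\<integral>\<^sup>+\<omega>. ennreal (F (restrict (noise \<omega>) {1..n})) \<partial>M)"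
    by (simp only: adapted_restrict[OF F])
  also have "\<dots> = (\<integral>\<^sup>+x. ennreal (F x) \<partial>distr M (PiM {1..n} (\<lambda>_. N01)) (\<lambda>\<omega>. restrict (noise \<omega>) {1..n}))"
    using measurable_compose[OF conjunct1[OF F[unfolded adapted_def]] measurable_ennreal]
    by (intro nn_integral_distr[symmetric] noise_restrict_measurable) simp
  also have "\<dots> = (\<integral>\<^sup>+x. ennreal (F x) \<partial>PiM {1..n} (\<lambda>_. N01))"
    by (simp only: distr_noise)
  finally show ?thesis .
qed

text \<open>The martingale property of S_T^\<alpha>: by independence, the innovation
  \<epsilon>_(n+1) can be integrated out separately (S_path_step_average).\<close>
lemma S_path_martingale:
  assumes g: "adapted n g" and g_nonneg: "\<And>x. g x \<ge> 0"
  shows "(\<integral>\<^sup>+\<omega>. ennreal (g (noise \<omega>) * S_path a \<alpha> y0 (noise \<omega>) (Suc n)) \<partial>M)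
       = (\<integral>\<^sup>+\<omega>. ennreal (g (noise \<omega>) * S_path a \<alpha> y0 (noise \<omega>) n) \<partial>M)"
proof -
  define F where "F x = g x * S_path a \<alpha> y0 x (Suc n)" for x
  define H where "H x = g x * S_path a \<alpha> y0 x n" for x
  have F: "adapted (Suc n) F"
    unfolding F_def by (intro adapted_mult adapted_mono[OF g] adapted_S_path) auto
  have H: "adapted n H"
    unfolding H_def by (intro adapted_mult g adapted_S_path)
  have insert: "{1..Suc n} = insert (Suc n) {1..n}" by auto
  interpret product_sigma_finite "\<lambda>_::nat. N01"
    by (intro product_sigma_finite.intro prob_space_imp_sigma_finite prob_space_normal_density) simp
  have integrate_last: "(\<integral>\<^sup>+z. ennreal (F (x(Suc n := z))) \<partial>N01) = ennreal (H x)" for x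
  proof -
    have "g (x(Suc n := z)) = g x" for z
      using g by (rule adapted_prefix) auto
    then show ?thesis
      unfolding F_def H_def using S_path_step_average[OF g_nonneg] by simp
  qed
  have "(\<integral>\<^sup>+\<omega>. ennreal (F (noise \<omega>)) \<partial>M) = (\<integral>\<^sup>+x. ennreal (F x) \<partial>PiM {1..Suc n} (\<lambda>_. N01))"
    by (rule nn_integral_adapted[OF F])
  also have "\<dots> = (\<integral>\<^sup>+x. (\<integral>\<^sup>+z. ennreal (F (x(Suc n := z))) \<partial>N01) \<partial>PiM {1..n} (\<lambda>_. N01))"
    unfolding insert using F[unfolded insert adapted_def]
    by (intro product_nn_integral_insert) auto
  also have "\<dots> = (\<integral>\<^sup>+\<omega>. ennreal (H (noise \<omega>)) \<partial>M)"
    unfolding integrate_last by (rule nn_integral_adapted[OF H, symmetric])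
  finally show ?thesis unfolding F_def H_def .
qed

end


section \<open>Ville's inequality\<close>

locale test_supermartingale = gaussian_noise +
  fixes X :: "(nat \<Rightarrow> real) \<Rightarrow> nat \<Rightarrow> real"
  assumes adapted_X: "adapted n (\<lambda>x. X x n)"
    and X_nonneg: "X x n \<ge> 0"
    and X_0: "X x 0 = 1"
    and supermartingale: "adapted n g \<Longrightarrow> (\<And>x. g x \<ge> 0) \<Longrightarrow>
      (\<integral>\<^sup>+\<omega>. ennreal (g (noise \<omega>) * X (noise \<omega>) (Suc n)) \<partial>M)
        \<le> (\<integral>\<^sup>+\<omega>. ennreal (g (noise \<omega>) * X (noise \<omega>) n) \<partial>M)"

definition stays_below :: "((nat \<Rightarrow> real) \<Rightarrow> nat \<Rightarrow> real) \<Rightarrow> real \<Rightarrow> nat \<Rightarrow> (nat \<Rightarrow> real) \<Rightarrow> real" where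
  "stays_below X c n x = of_bool (\<forall>T\<in>{1..n}. X x T \<le> c)"

text \<open>The process stopped at the first time it exceeds c.\<close>
fun stopped :: "((nat \<Rightarrow> real) \<Rightarrow> nat \<Rightarrow> real) \<Rightarrow> real \<Rightarrow> nat \<Rightarrow> (nat \<Rightarrow> real) \<Rightarrow> real" where
  "stopped X c 0 x = X x 0"
| "stopped X c (Suc n) x = stays_below X c n x * X x (Suc n) + (1 - stays_below X c n x) * stopped X c n x"

lemma stays_below_Suc:
  "stays_below X c (Suc n) x = (if X x (Suc n) \<le> c then stays_below X c n x else 0)"
  by (auto simp: stays_below_def atLeastAtMostSuc_conv)

lemma stopped_unstopped:
  "stopped X c n x = stays_below X c n x * X x n + (1 - stays_below X c n x) * stopped X c n x"
  by (cases n) (simp_all add: stays_below_def)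

lemma stopped_exceeds: "stays_below X c n x = 0 \<Longrightarrow> c \<le> stopped X c n x"
  by (induction n) (auto simp: stays_below_def le_Suc_eq)

context test_supermartingale
begin

lemma stopped_nonneg: "stopped X c n x \<ge> 0"
  by (induction n) (simp_all add: X_nonneg stays_below_def)

lemma adapted_stays_below: "adapted n (stays_below X c n)"
proof (induction n)
  case 0
  then show ?case by (simp add: stays_below_def adapted_const)
next
  case (Suc n)
  have "adapted (Suc n) (stays_below X c n)"
    using Suc by (rule adapted_mono) simp
  then have "adapted (Suc n) (\<lambda>x. if X x (Suc n) \<le> c then stays_below X c n x else 0)"
    by (rule adapted_compose2[OF _ adapted_X, where h="\<lambda>u v. if v \<le> c then u else 0"]) measurable
  then show ?case by (simp add: stays_below_Suc[abs_def])
qed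

lemma adapted_stopped: "adapted n (stopped X c n)"
proof (induction n)
  case 0
  then show ?case using adapted_X by simp
next
  case (Suc n)
  have below: "adapted (Suc n) (stays_below X c n)"
    by (rule adapted_mono[OF adapted_stays_below]) simp
  have stopped: "adapted (Suc n) (stopped X c n)"
    using Suc by (rule adapted_mono) simp
  have "adapted (Suc n) (\<lambda>x. stays_below X c n x * X x (Suc n))"
    by (rule adapted_mult[OF below adapted_X])
  moreover have "adapted (Suc n) (\<lambda>x. (1 - stays_below X c n x) * stopped X c n x)"
    by (rule adapted_compose2[OF below stopped, where h="\<lambda>u v. (1 - u) * v"]) measurable
  ultimately have "adapted (Suc n) (\<lambda>x. stays_below X c n x * X x (Suc n)
      + (1 - stays_below X c n x) * stopped X c n x)"
    by (rule adapted_compose2[where h="(+)"]) measurable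
  then show ?case by simp
qed

text \<open>The stopped process is again a supermartingale, so its expectation stays at most 1.\<close>
lemma nn_integral_stopped: "(\<integral>\<^sup>+\<omega>. ennreal (stopped X c n (noise \<omega>)) \<partial>M) \<le> 1"
proof (induction n)
  case 0
  then show ?case by (simp add: X_0 emeasure_space_1)
next
  case (Suc n)
  let ?b = "stays_below X c n"
  have b: "0 \<le> ?b x" "?b x \<le> 1" for x by (auto simp: stays_below_def)
  have b_Suc: "adapted (Suc n) ?b" by (rule adapted_mono[OF adapted_stays_below]) auto
  define rest where "rest x = (1 - ?b x) * stopped X c n x" for x
  have rest: "adapted n rest"
    unfolding rest_def
    by (rule adapted_compose2[OF adapted_stays_below adapted_stopped, where h="\<lambda>u v. (1 - u) * v"])
      measurable
  have rest_nonneg: "rest x \<ge> 0" for x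
    using b[of x] by (simp add: rest_def stopped_nonneg)
  have split: "ennreal (?b x * X x m + rest x) = ennreal (?b x * X x m) + ennreal (rest x)" for x m
    using b[of x] X_nonneg[of x m] rest_nonneg[of x] by (intro ennreal_plus) auto
  have split_n: "ennreal (stopped X c n x) = ennreal (?b x * X x n) + ennreal (rest x)" for x
  proof -
    have "stopped X c n x = ?b x * X x n + rest x"
      unfolding rest_def by (rule stopped_unstopped)
    then show ?thesis using split by simp
  qed
  have "(\<integral>\<^sup>+\<omega>. ennreal (stopped X c (Suc n) (noise \<omega>)) \<partial>M)
      = (\<integral>\<^sup>+\<omega>. ennreal (?b (noise \<omega>) * X (noise \<omega>) (Suc n)) + ennreal (rest (noise \<omega>)) \<partial>M)"
    unfolding stopped.simps rest_def[symmetric] split ..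
  also have "\<dots> = (\<integral>\<^sup>+\<omega>. ennreal (?b (noise \<omega>) * X (noise \<omega>) (Suc n)) \<partial>M)
        + (\<integral>\<^sup>+\<omega>. ennreal (rest (noise \<omega>)) \<partial>M)"
    using measurable_adapted[OF adapted_mult[OF b_Suc adapted_X]] measurable_adapted[OF rest]
    by (intro nn_integral_add) auto
  also have "\<dots> \<le> (\<integral>\<^sup>+\<omega>. ennreal (?b (noise \<omega>) * X (noise \<omega>) n) \<partial>M)
        + (\<integral>\<^sup>+\<omega>. ennreal (rest (noise \<omega>)) \<partial>M)"
    using b by (intro add_right_mono supermartingale adapted_stays_below) auto
  also have "\<dots> = (\<integral>\<^sup>+\<omega>. ennreal (?b (noise \<omega>) * X (noise \<omega>) n) + ennreal (rest (noise \<omega>)) \<partial>M)"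
    using measurable_adapted[OF adapted_mult[OF adapted_stays_below adapted_X]] measurable_adapted[OF rest]
    by (intro nn_integral_add[symmetric]) auto
  also have "\<dots> = (\<integral>\<^sup>+\<omega>. ennreal (stopped X c n (noise \<omega>)) \<partial>M)"
    unfolding split_n ..
  finally show ?case using Suc by simp
qed

text \<open>Markov's inequality for the stopped process: up to time n, the process
  exceeds c with probability at most 1/c.\<close>
lemma ville_finite:
  assumes c: "c > 0"
  shows "measure M {\<omega> \<in> space M. stays_below X c n (noise \<omega>) = 0} \<le> 1 / c"
proof -
  let ?B = "{\<omega> \<in> space M. stays_below X c n (noise \<omega>) = 0}"
  have B: "?B \<in> sets M"
    using measurable_adapted[OF adapted_stays_below] by measurable
  have "ennreal (c * measure M ?B) = (\<integral>\<^sup>+\<omega>. ennreal c * indicator ?B \<omega> \<partial>M)"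
    using c by (simp add: nn_integral_cmult_indicator[OF B] emeasure_eq_measure ennreal_mult)
  also have "\<dots> \<le> (\<integral>\<^sup>+\<omega>. ennreal (stopped X c n (noise \<omega>)) \<partial>M)"
    using stopped_exceeds by (intro nn_integral_mono) (auto split: split_indicator intro: ennreal_leI)
  also have "\<dots> \<le> 1" by (rule nn_integral_stopped)
  finally have "c * measure M ?B \<le> 1"
    by (simp add: ennreal_le_1)
  then show ?thesis
    using c by (simp add: field_simps)
qed

theorem ville:
  assumes c: "c > 0"
  shows "1 - 1 / c \<le> measure M {\<omega> \<in> space M. \<forall>T\<ge>1. X (noise \<omega>) T \<le> c}"
proof -
  define B where "B n = {\<omega> \<in> space M. stays_below X c n (noise \<omega>) = 0}" for n
  have "B n \<in> sets M" for n
    unfolding B_def using measurable_adapted[OF adapted_stays_below] by measurable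
  then have B: "range B \<subseteq> sets M" by auto
  have "incseq B"
    by (rule incseq_SucI) (auto simp: B_def stays_below_Suc)
  with B have "(\<lambda>n. measure M (B n)) \<longlonglongrightarrow> measure M (\<Union>n. B n)"
    by (rule finite_Lim_measure_incseq)
  then have exceed: "measure M (\<Union>n. B n) \<le> 1 / c"
    using ville_finite[OF c] by (intro LIMSEQ_le_const2) (auto simp: B_def)
  have "(\<forall>n. stays_below X c n x \<noteq> 0) \<longleftrightarrow> (\<forall>T\<ge>1. X x T \<le> c)" for x
    unfolding stays_below_def by (auto, metis atLeastAtMost_iff order_refl)
  then have "{\<omega> \<in> space M. \<forall>T\<ge>1. X (noise \<omega>) T \<le> c} = space M - (\<Union>n. B n)"
    by (auto simp: B_def)
  with exceed B show ?thesis
    by (simp add: prob_compl sets.countable_UN)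
qed

end


text \<open>Part (ii): under P_\<alpha> the statistic S_T^\<alpha> is a test
  martingale, so \<alpha> stays in every C_T with probability at least
  1 - \<delta>.\<close>
lemma (in gaussian_noise) coverage:
  assumes \<delta>: "0 < \<delta>"
  shows "1 - \<delta> \<le> measure M {\<omega> \<in> space M. \<forall>T\<ge>1.
            \<alpha> \<in> conf_set a \<delta> (Gamma0 \<alpha> y0 (noise \<omega>) T) (Gamma1 \<alpha> y0 (noise \<omega>) T)}"
proof -
  interpret test_supermartingale M \<epsilon> "S_path a \<alpha> y0"
    by unfold_locales (simp_all add: adapted_S_path S_path_nonneg S_path_0 S_path_martingale)
  show ?thesis
    using ville[of "1 / \<delta>"] \<delta> by (simp add: conf_set_def S_path_def)
qed

theorem mainTheorem3:
  fixes a \<delta> y0 :: real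
    and M :: "'w measure" and \<epsilon> :: "nat \<Rightarrow> 'w \<Rightarrow> real"
  assumes a_pos: "a > 0"
    and delta: "0 < \<delta>" "\<delta> < 1"
    and prob: "prob_space M"
    and indep: "prob_space.indep_vars M (\<lambda>_. borel) \<epsilon> {1..}"
    and normal: "\<And>t. t \<ge> 1 \<Longrightarrow> distributed M lborel (\<epsilon> t) std_normal_density"
  shows
    "(\<forall>\<alpha> (e :: nat \<Rightarrow> real) T. T \<ge> 1 \<longrightarrow> Gamma0 \<alpha> y0 e T > 0 \<longrightarrow>
        conf_set a \<delta> (Gamma0 \<alpha> y0 e T) (Gamma1 \<alpha> y0 e T) =
        {\<beta>. \<bar>\<beta> - Gamma1 \<alpha> y0 e T / Gamma0 \<alpha> y0 e T\<bar> \<le>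
              sqrt ((a\<^sup>2 * Gamma0 \<alpha> y0 e T + 1) / (a\<^sup>2 * (Gamma0 \<alpha> y0 e T)\<^sup>2)
                    * ln ((a\<^sup>2 * Gamma0 \<alpha> y0 e T + 1) / \<delta>\<^sup>2))})
     \<and> (\<forall>\<alpha>. measure M {\<omega> \<in> space M. \<forall>T\<ge>1.
            \<alpha> \<in> conf_set a \<delta> (Gamma0 \<alpha> y0 (\<lambda>t. \<epsilon> t \<omega>) T)
                              (Gamma1 \<alpha> y0 (\<lambda>t. \<epsilon> t \<omega>) T)} \<ge> 1 - \<delta>)"
proof -
  interpret gaussian_noise M \<epsilon>
    using prob indep normal by (intro gaussian_noise.intro gaussian_noise_axioms.intro)
  show ?thesis
    using conf_set_interval[OF a_pos delta] coverage[OF delta(1)] by auto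
qed

end
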